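(* In the setting described in the context, let $\{q,q'\}\in F$ be an edge of $K$ with source $S(q,q')=(u,v)$, where $\{u,v\}\in E_i$ has weight $w$. Then \[ d_Z(q,u)+w+d_Z(v,q')\le (1+\varepsilon/2)\,w, \] i.e., the tour in the spanner (with Steiner points) consisting of a $Z$-path from $q$ to $u$, the edge $\{u,v\}$, and a $Z$-path from $v$ to $q'$ has length at most $(1+\varepsilon/2)w$.
   Context: Let $G=(V,E)$ be a connected undirected graph on $n$ vertices with positive integer edge weights $w$ and a unique minimum spanning tree $Z$. Fix an integer $k\ge 2$, $\varepsilon>0$, $t=(2k-1)(1+\varepsilon)$, and let $H$ be the greedy spanner: starting from $H=(V,\emptyset)$, the edges of $E$ are processed in non-decreasing order of weight and $\{u,v\}$ is added to $H$ iff currently $d_H(u,v)>t\cdot w(u,v)$. Order the vertices $v_1,\dots,v_n$ by a preorder traversal of $Z$ and let $L=\sum_{j=2}^n d_Z(v_{j-1},v_j)$. Fix $i\in\{1,\dots,\lceil\log_k n\rceil\}$, set $a=k^{i-1}L/n$, and let $E_i=\{e\in E(H)\setminus E(Z): a<w(e)\le ka\}$. View $Z$ as a metric tree (each edge of weight $x$ is a segment of length $x$) and let $d_Z$ denote distance in it. Let $P=(p_0,\dots,p_L)$ be a path with unit-length edges, where $v_1=p_0$ and $v_j=p_{\ell_j}$ with $\ell_1=0$, $\ell_j=\ell_{j-1}+d_Z(v_{j-1},v_j)$; each point $p_h$ with $\ell_{j-1}\le h\le \ell_j$ is identified with the point of $Z$ on the $Z$-path from $v_{j-1}$ to $v_j$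 at distance $h-\ell_{j-1}$ from $v_{j-1}$ (these added points are Steiner points subdividing edges of $Z\subseteq H$; $\hat H$ denotes $H$ with these subdivisions). Set $s=8L/(\varepsilon a)$, assumed (by scaling) to be such that $s$ and $L/s=\varepsilon a/8$ are integers. For $j\in[s]$ the interval $I_j$ is $\{p_{(j-1)L/s},\dots,p_{jL/s}\}$, and $r_j$ is an arbitrarily chosen interior point of $I_j$; $R=\{r_1,\dots,r_s\}$. For an integer $b\ge 0$, $N_b(j)=\{r_h: h\in[s], |j-h|\le b\}$. The graph $K=(R,F)$ is defined as follows: for each $e=\{u,v\}\in E_i$ with $u\in I_h$, $v\in I_j$, let $b=\lfloor w(e)/a\rfloor$ and let $M$ be an arbitrary maximal matching between $N_b(h)$ and $N_b(j)$; all edges of $M$ are added to $F$, and for each $\{q,q'\}\in M$ with $q\in N_b(h)$, $q'\in N_b(j)$, the edge $\{u,v\}$ is called its source, written $S(q,q')=(u,v)$. *)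

theory Defs
  imports Complex_Main
begin

definition walk :: "'v set set \<Rightarrow> 'v list \<Rightarrow> bool" where
  "walk F xs \<longleftrightarrow> xs \<noteq> [] \<and> (\<forall>i. Suc i < length xs \<longrightarrow> {xs ! i, xs ! Suc i} \<in> F)"

definition wlen :: "('v set \<Rightarrow> nat) \<Rightarrow> 'v list \<Rightarrow> nat" where
  "wlen w xs = (\<Sum>i<length xs - 1. w {xs ! i, xs ! Suc i})"

definition walk_betw :: "'v set set \<Rightarrow> 'v \<Rightarrow> 'v list \<Rightarrow> 'v \<Rightarrow> bool" where
  "walk_betw F x xs y \<longleftrightarrow> walk F xs \<and> hd xs = x \<and> last xs = y"

definition connected_on :: "'v set \<Rightarrow> 'v set set \<Rightarrow> bool" where
  "connected_on V F \<longleftrightarrow> (\<forall>x\<in>V. \<forall>y\<in>V. \<exists>xs. walk_betw F x xs y)"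

text \<open>Shortest-path distance (used only in connected graphs, where it is attained).\<close>
definition gdist :: "'v set set \<Rightarrow> ('v set \<Rightarrow> nat) \<Rightarrow> 'v \<Rightarrow> 'v \<Rightarrow> nat" where
  "gdist F w x y = (LEAST d. \<exists>xs. walk_betw F x xs y \<and> wlen w xs = d)"

definition acyclic_edges :: "'v set set \<Rightarrow> bool" where
  "acyclic_edges F \<longleftrightarrow> (\<forall>e\<in>F. \<forall>x y. e = {x, y} \<longrightarrow> \<not> (\<exists>xs. walk_betw (F - {e}) x xs y))"

definition spanning_tree :: "'v set \<Rightarrow> 'v set set \<Rightarrow> 'v set set \<Rightarrow> bool" where
  "spanning_tree V E T \<longleftrightarrow> T \<subseteq> E \<and> connected_on V T \<and> acyclic_edges T"

definition unique_mst :: "'v set \<Rightarrow> 'v set set \<Rightarrow> ('v set \<Rightarrow> nat) \<Rightarrow> 'v set set \<Rightarrow> bool" where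
  "unique_mst V E w Z \<longleftrightarrow> spanning_tree V E Z \<and>
     (\<forall>T. spanning_tree V E T \<and> T \<noteq> Z \<longrightarrow> sum w Z < sum w T)"

definition graph :: "'v set \<Rightarrow> 'v set set \<Rightarrow> bool" where
  "graph V E \<longleftrightarrow> finite V \<and> (\<forall>e\<in>E. e \<subseteq> V \<and> card e = 2)"

definition greedy_step :: "real \<Rightarrow> ('v set \<Rightarrow> nat) \<Rightarrow> 'v set set \<Rightarrow> 'v set \<Rightarrow> 'v set set" where
  "greedy_step t w H e =
     (if (\<forall>xs. walk H xs \<and> {hd xs, last xs} = e \<longrightarrow> t * real (w e) < real (wlen w xs))
      then insert e H else H)"

text \<open>Process the edges in the order of the list es (which must be sorted by weight).\<close>
definition greedy_spanner :: "real \<Rightarrow> ('v set \<Rightarrow> nat) \<Rightarrow> 'v set list \<Rightarrow> 'v set set" where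
  "greedy_spanner t w es = foldl (greedy_step t w) {} es"

text \<open>vs is a preorder (DFS) traversal of the tree Z rooted at vs!0: for j>0, the
parent of vs!j lies on the tree path from the root to vs!(j-1).\<close>
definition preorder_traversal :: "'v set \<Rightarrow> 'v set set \<Rightarrow> ('v set \<Rightarrow> nat) \<Rightarrow> 'v list \<Rightarrow> bool" where
  "preorder_traversal V Z w vs \<longleftrightarrow> distinct vs \<and> set vs = V \<and>
     (\<forall>j. 0 < j \<and> j < length vs \<longrightarrow>
        (\<exists>p. {p, vs ! j} \<in> Z \<and>
             gdist Z w (vs ! 0) p + w {p, vs ! j} = gdist Z w (vs ! 0) (vs ! j) \<and>
             gdist Z w (vs ! 0) p + gdist Z w p (vs ! (j - 1)) = gdist Z w (vs ! 0) (vs ! (j - 1))))"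

text \<open>A point (x, y, t) of the metric tree: either a vertex (x = y, t = 0) or the
point on the tree edge {x,y} at distance t from x.  Several triples may denote the
same point; this is harmless since we only use the distance below.\<close>
type_synonym 'v tpt = "'v \<times> 'v \<times> real"

definition vtx :: "'v \<Rightarrow> 'v tpt" where "vtx x = (x, x, 0)"

definition valid_tpt :: "'v set \<Rightarrow> 'v set set \<Rightarrow> ('v set \<Rightarrow> nat) \<Rightarrow> 'v tpt \<Rightarrow> bool" where
  "valid_tpt V Z w p = (case p of (x, y, t) \<Rightarrow>
      (x = y \<and> x \<in> V \<and> t = 0) \<or> (x \<noteq> y \<and> {x, y} \<in> Z \<and> 0 \<le> t \<and> t \<le> real (w {x, y})))"

definition toff :: "('v set \<Rightarrow> nat) \<Rightarrow> 'v tpt \<Rightarrow> 'v \<Rightarrow> real" where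
  "toff w p a = (case p of (x, y, t) \<Rightarrow>
      if a = x then t else if x = y then 0 else real (w {x, y}) - t)"

definition tends :: "'v tpt \<Rightarrow> 'v set" where
  "tends p = (case p of (x, y, t) \<Rightarrow> {x, y})"

text \<open>Distance in the metric tree: either both points lie on the same edge, or a
shortest path leaves through an endpoint of each edge.\<close>
definition tdist :: "'v set set \<Rightarrow> ('v set \<Rightarrow> nat) \<Rightarrow> 'v tpt \<Rightarrow> 'v tpt \<Rightarrow> real" where
  "tdist Z w p p' = Min
     ({toff w p a + real (gdist Z w a b) + toff w p' b | a b. a \<in> tends p \<and> b \<in> tends p'} \<union>
      (case p of (x, y, t) \<Rightarrow> case p' of (x', y', t') \<Rightarrow>
         if x \<noteq> y \<and> x' = x \<and> y' = y then {\<bar>t - t'\<bar>}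
         else if x \<noteq> y \<and> x' = y \<and> y' = x then {\<bar>t - (real (w {x, y}) - t')\<bar>}
         else {}))"

end

theory Submission
  imports Defs
begin

text \<open>Let q = P(x) and let y be the tour time at which P passes through u. The tour point P is
  1-Lipschitz towards tree vertices, so d(q, u) \<le> |x - y|: across different segments of the
  preorder tour this is the triangle inequality along the tour, and within one segment it uses
  that a point and a vertex on a common tree geodesic are as far apart as their positions on it
  differ. Since x and y lie in intervals of length \<epsilon>a/8 whose indices differ by at most
  b = \<lfloor>w/a\<rfloor>, we get d(q, u) \<le> (b + 1) \<epsilon>a/8 \<le> \<epsilon>w/4 (using a < w), and likewise
  d(v, q') \<le> \<epsilon>w/4.\<close>

section \<open>Walks and shortest-path distance\<close>

lemma walk_singleton [simp]: "walk F [x]"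
  by (simp add: walk_def)

lemma not_walk_Nil [simp]: "\<not> walk F []"
  by (simp add: walk_def)

lemma walk_Cons_Cons [simp]: "walk F (x # y # xs) \<longleftrightarrow> {x, y} \<in> F \<and> walk F (y # xs)"
  unfolding walk_def by (auto simp: less_Suc_eq_0_disj)

lemma wlen_singleton [simp]: "wlen w [x] = 0"
  by (simp add: wlen_def)

lemma wlen_Cons_Cons [simp]: "wlen w (x # y # xs) = w {x, y} + wlen w (y # xs)"
  unfolding wlen_def by (simp del: sum.lessThan_Suc add: sum.lessThan_Suc_shift)

lemma walk_append_Cons: "walk F (xs @ y # ys) \<longleftrightarrow> walk F (xs @ [y]) \<and> walk F (y # ys)"
proof (induction xs)
  case (Cons x xs)
  then show ?case by (cases xs) auto
qed simp

lemma wlen_append_Cons: "wlen w (xs @ y # ys) = wlen w (xs @ [y]) + wlen w (y # ys)"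
proof (induction xs)
  case (Cons x xs)
  then show ?case by (cases xs) auto
qed simp

lemma walk_wlen_rev: "walk F (rev xs) = walk F xs \<and> wlen w (rev xs) = wlen w xs"
proof (induction xs rule: induct_list012)
  case (3 x y zs)
  have split: "rev (x # y # zs) = rev zs @ y # [x]" by simp
  have last_pair: "rev zs @ [y] = rev (y # zs)" by simp
  show ?case
    unfolding split walk_append_Cons wlen_append_Cons last_pair using "3"(2)
    by (auto simp: insert_commute)
qed auto

lemma walk_rev [simp]: "walk F (rev xs) \<longleftrightarrow> walk F xs"
  using walk_wlen_rev by blast

lemma wlen_rev [simp]: "wlen w (rev xs) = wlen w xs"
  using walk_wlen_rev by blast

lemma walk_betw_rev: "walk_betw F x xs y \<Longrightarrow> walk_betw F y (rev xs) x"
  unfolding walk_betw_def by (auto simp: hd_rev last_rev)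

lemma walk_betw_append:
  assumes "walk_betw F x xs y" "walk_betw F y ys z"
  shows "walk_betw F x (xs @ tl ys) z" "wlen w (xs @ tl ys) = wlen w xs + wlen w ys"
proof -
  have ne: "xs \<noteq> []" "ys \<noteq> []" and ends: "last xs = y" "hd ys = y"
    using assms by (auto simp: walk_betw_def walk_def)
  obtain xs' where xs: "xs = xs' @ [y]"
    using append_butlast_last_id[OF ne(1)] ends(1) by metis
  obtain ys' where ys: "ys = y # ys'"
    using list.collapse[OF ne(2)] ends(2) by metis
  have "walk F (xs' @ [y])" "hd (xs' @ [y]) = x"
    using assms(1) unfolding xs walk_betw_def by simp_all
  moreover have "walk F (y # ys')" "last (y # ys') = z"
    using assms(2) unfolding ys walk_betw_def by simp_all
  ultimately show "walk_betw F x (xs @ tl ys) z"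
    unfolding xs ys walk_betw_def by (simp add: walk_append_Cons[of F xs' y ys'] hd_append split: if_splits)
  show "wlen w (xs @ tl ys) = wlen w xs + wlen w ys"
    by (simp add: xs ys wlen_append_Cons[of w xs' y ys'])
qed

lemma walk_take: "walk F xs \<Longrightarrow> 0 < n \<Longrightarrow> walk F (take n xs)"
  by (auto simp: walk_def)

lemma walk_drop: "walk F xs \<Longrightarrow> n < length xs \<Longrightarrow> walk F (drop n xs)"
  unfolding walk_def by (simp add: less_diff_conv)

lemma walk_remove_edge: "walk F xs \<Longrightarrow> x \<notin> set xs \<Longrightarrow> x \<in> e \<Longrightarrow> walk (F - {e}) xs"
  by (induction xs rule: induct_list012) auto

lemma wlen_take_Suc_split:
  assumes "i \<le> j" "j < length xs"
  shows "wlen w (take (Suc j) xs) = wlen w (take (Suc i) xs) + wlen w (drop i (take (Suc j) xs))"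
proof -
  define ys where "ys = take (Suc j) xs"
  have i: "i < length ys"
    using assms unfolding ys_def by simp
  have "wlen w ys = wlen w (take i ys @ [ys ! i]) + wlen w (ys ! i # drop (Suc i) ys)"
    using id_take_nth_drop[OF i] wlen_append_Cons by metis
  moreover have "take i ys @ [ys ! i] = take (Suc i) xs"
    using take_Suc_conv_app_nth[OF i] assms(1) unfolding ys_def by (simp add: min_def)
  ultimately show ?thesis
    using Cons_nth_drop_Suc[OF i] unfolding ys_def by simp
qed

lemma walk_betw_drop_take:
  assumes "walk F xs" "i \<le> j" "j < length xs"
  shows "walk_betw F (xs ! i) (drop i (take (Suc j) xs)) (xs ! j)"
  using assms walk_drop[OF walk_take[OF assms(1)], of "Suc j" i]
  by (simp add: walk_betw_def hd_drop_conv_nth last_drop last_conv_nth)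

lemma gdist_le_wlen: "walk_betw F x xs y \<Longrightarrow> gdist F w x y \<le> wlen w xs"
  unfolding gdist_def by (rule Least_le) auto

lemma gdist_attained: "walk_betw F x xs y \<Longrightarrow> \<exists>ys. walk_betw F x ys y \<and> wlen w ys = gdist F w x y"
  unfolding gdist_def by (rule LeastI_ex) auto

lemma gdist_commute: "gdist F w x y = gdist F w y x"
proof -
  have reverse: "\<exists>xs. walk_betw F b xs a \<and> wlen w xs = d" if "walk_betw F a xs b" "wlen w xs = d" for a b xs d
    using walk_betw_rev[OF that(1)] that(2) by (intro exI[of _ "rev xs"]) simp
  have rev_walks: "(\<exists>xs. walk_betw F x xs y \<and> wlen w xs = d) \<longleftrightarrow> (\<exists>xs. walk_betw F y xs x \<and> wlen w xs = d)" for d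
    using reverse by blast
  show ?thesis
    unfolding gdist_def rev_walks ..
qed

lemma gdist_self [simp]: "gdist F w x x = 0"
  using gdist_le_wlen[of F x "[x]" x w] by (simp add: walk_betw_def)

lemma gdist_edge_le: "{x, y} \<in> F \<Longrightarrow> gdist F w x y \<le> w {x, y}"
  using gdist_le_wlen[of F x "[x, y]" y w] by (simp add: walk_betw_def)

section \<open>Paths in weighted trees\<close>

locale weighted_tree =
  fixes V :: "'v set" and F :: "'v set set" and w :: "'v set \<Rightarrow> nat"
  assumes edges: "e \<in> F \<Longrightarrow> e \<subseteq> V \<and> card e = 2"
    and weights_pos: "e \<in> F \<Longrightarrow> 0 < w e"
    and connected: "connected_on V F"
    and acyclic: "acyclic_edges F"
begin

abbreviation \<delta> where "\<delta> \<equiv> gdist F w"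

lemma edge_ends_distinct: "{x, y} \<in> F \<Longrightarrow> x \<noteq> y"
  using edges by fastforce

lemma edge_ends_in_V: "{x, y} \<in> F \<Longrightarrow> x \<in> V \<and> y \<in> V"
  using edges by blast

lemma wlen_pos: "walk F xs \<Longrightarrow> 2 \<le> length xs \<Longrightarrow> 0 < wlen w xs"
  by (cases xs rule: remdups_adj.cases) (auto simp: weights_pos)

lemma shortest_walk_exists: "x \<in> V \<Longrightarrow> y \<in> V \<Longrightarrow> \<exists>xs. walk_betw F x xs y \<and> wlen w xs = \<delta> x y"
  using connected gdist_attained unfolding connected_on_def by metis

lemma gdist_triangle:
  assumes "x \<in> V" "y \<in> V" "z \<in> V"
  shows "\<delta> x z \<le> \<delta> x y + \<delta> y z"
proof -
  obtain xs ys where "walk_betw F x xs y" "wlen w xs = \<delta> x y" "walk_betw F y ys z" "wlen w ys = \<delta> y z"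
    using shortest_walk_exists assms by metis
  then show ?thesis
    using walk_betw_append gdist_le_wlen by metis
qed

lemma gdist_eq_0_imp_eq:
  assumes "x \<in> V" "y \<in> V" "\<delta> x y = 0"
  shows "x = y"
proof -
  obtain xs where xs: "walk_betw F x xs y" "wlen w xs = 0"
    using shortest_walk_exists assms by metis
  then have "length xs < 2"
    using wlen_pos unfolding walk_betw_def by fastforce
  moreover have "xs \<noteq> []"
    using xs unfolding walk_betw_def walk_def by blast
  ultimately obtain z where "xs = [z]"
    by (cases xs rule: remdups_adj.cases) auto
  then show ?thesis
    using xs unfolding walk_betw_def by auto
qed

lemma gdist_le_wlen_take_diff:
  assumes "walk F xs" "i \<le> j" "j < length xs"
  shows "\<delta> (xs ! i) (xs ! j) + wlen w (take (Suc i) xs) \<le> wlen w (take (Suc j) xs)"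
  using gdist_le_wlen[OF walk_betw_drop_take[OF assms]] wlen_take_Suc_split[OF assms(2,3)] by simp

lemma wlen_take_strict_mono:
  assumes "walk F xs" "i < j" "j < length xs"
  shows "wlen w (take (Suc i) xs) < wlen w (take (Suc j) xs)"
proof -
  have "walk_betw F (xs ! i) (drop i (take (Suc j) xs)) (xs ! j)"
    using walk_betw_drop_take[OF assms(1) _ assms(3)] assms(2) by simp
  then have "0 < wlen w (drop i (take (Suc j) xs))"
    using wlen_pos assms(2,3) unfolding walk_betw_def by simp
  then show ?thesis
    using wlen_take_Suc_split[of i j xs w] assms(2,3) by simp
qed

lemma shortest_walk_distinct:
  assumes xs: "walk_betw F x xs y" "wlen w xs = \<delta> x y"
  shows "distinct xs"
proof (rule ccontr)
  assume "\<not> distinct xs"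
  then obtain as c bs cs where split: "xs = as @ c # (bs @ c # cs)"
    using not_distinct_decomp by fastforce
  define loop where "loop = (c # bs) @ [c]"
  have walks: "walk F (as @ [c])" "walk F loop" "walk F (c # cs)"
    using xs(1) walk_append_Cons[of F as c "bs @ c # cs"] walk_append_Cons[of F "c # bs" c cs]
    unfolding split walk_betw_def loop_def by auto
  have len: "wlen w xs = wlen w (as @ [c]) + wlen w loop + wlen w (c # cs)"
    using wlen_append_Cons[of w as c "bs @ c # cs"] wlen_append_Cons[of w "c # bs" c cs]
    unfolding split loop_def by simp
  have "0 < wlen w loop"
    using wlen_pos walks(2) unfolding loop_def by simp
  moreover have "walk_betw F x (as @ c # cs) y"
    using xs(1) walks walk_append_Cons[of F as c cs] unfolding split walk_betw_def
    by (cases as; cases cs) auto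
  ultimately show False
    using gdist_le_wlen[of F x "as @ c # cs" y w] wlen_append_Cons[of w as c cs] len xs(2)
    by linarith
qed

lemma distinct_walk_unique:
  assumes "walk F xs" "walk F ys" "distinct xs" "distinct ys" "hd xs = hd ys" "last xs = last ys"
  shows "xs = ys"
  using assms
proof (induction xs arbitrary: ys rule: induct_list012)
  case (2 x)
  then obtain ys' where ys: "ys = x # ys'"
    by (cases ys) (auto simp: walk_def)
  have "ys' = []"
  proof (rule ccontr)
    assume "ys' \<noteq> []"
    then have "last ys \<in> set ys'"
      using ys by simp
    with 2 ys show False by simp
  qed
  with ys show ?case by simp
next
  case (3 x x' xs)
  have "ys \<noteq> [x]"
    using "3.prems"(3,6) last_in_set[of "x' # xs"] by auto
  then obtain y' ys' where ys: "ys = x # y' # ys'"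
    using "3.prems"(2,5) by (cases ys rule: remdups_adj.cases) (auto simp: walk_def)
  show ?case
  proof (cases "y' = x'")
    case True
    then show ?thesis
      using "3.IH"(2)[of "y' # ys'"] "3.prems" ys by auto
  next
    case False
    define e where "e = {x, x'}"
    have "e \<in> F"
      using "3.prems"(1) unfolding e_def by simp
    have "walk (F - {e}) (x # y' # ys')"
      using "3.prems"(2,4) walk_remove_edge[of F "y' # ys'" x e] False
      unfolding ys e_def by (auto simp: doubleton_eq_iff)
    moreover have "walk (F - {e}) (x' # xs)"
      using "3.prems"(1,3) walk_remove_edge[of F "x' # xs" x e] unfolding e_def by simp
    then have "walk (F - {e}) (rev (x' # xs))"
      unfolding walk_rev .
    moreover have "hd (rev (x' # xs)) = last ys" "last (rev (x' # xs)) = x'"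
      using "3.prems"(6) unfolding hd_rev last_rev by simp_all
    ultimately have "walk_betw (F - {e}) x (x # y' # ys') (last ys)"
      and "walk_betw (F - {e}) (last ys) (rev (x' # xs)) x'"
      unfolding ys walk_betw_def by simp_all
    then have "\<exists>zs. walk_betw (F - {e}) x zs x'"
      by (blast intro: walk_betw_append(1))
    then show ?thesis
      using acyclic \<open>e \<in> F\<close> unfolding acyclic_edges_def e_def by blast
  qed
qed auto

lemma shortest_walk_through:
  assumes "A \<in> V" "B \<in> V" "c \<in> V"
    and W: "walk_betw F A W B" "wlen w W = \<delta> A B"
    and c: "\<delta> A c + \<delta> c B = \<delta> A B"
  shows "\<exists>i<length W. W ! i = c \<and> wlen w (take (Suc i) W) = \<delta> A c"
proof -
  obtain W1 W2 where W1: "walk_betw F A W1 c" "wlen w W1 = \<delta> A c"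
    and W2: "walk_betw F c W2 B" "wlen w W2 = \<delta> c B"
    using shortest_walk_exists assms(1-3) by metis
  have "W1 @ tl W2 = W"
  proof (rule distinct_walk_unique)
    show "walk F (W1 @ tl W2)" "hd (W1 @ tl W2) = hd W" "last (W1 @ tl W2) = last W"
      using walk_betw_append(1)[OF W1(1) W2(1)] W(1) unfolding walk_betw_def by auto
    show "distinct (W1 @ tl W2)"
      using shortest_walk_distinct walk_betw_append[OF W1(1) W2(1)] W1(2) W2(2) c by metis
    show "walk F W" "distinct W"
      using W shortest_walk_distinct unfolding walk_betw_def by blast+
  qed
  moreover have "W1 \<noteq> []" "last W1 = c"
    using W1 unfolding walk_betw_def walk_def by blast+
  ultimately have "W ! (length W1 - 1) = c" "take (Suc (length W1 - 1)) W = W1" "length W1 - 1 < length W"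
    by (cases W1; auto simp: nth_append last_conv_nth)+
  with W1(2) show ?thesis
    by metis
qed

lemma geodesic_ordered:
  assumes "A \<in> V" "B \<in> V" "c \<in> V" "u \<in> V"
    and "\<delta> A c + \<delta> c B = \<delta> A B" "\<delta> A u + \<delta> u B = \<delta> A B" "\<delta> A c \<le> \<delta> A u"
  shows "\<delta> A c + \<delta> c u \<le> \<delta> A u"
proof -
  obtain W where W: "walk_betw F A W B" "wlen w W = \<delta> A B"
    using shortest_walk_exists assms by blast
  then have "walk F W"
    unfolding walk_betw_def by blast
  obtain i j where i: "i < length W" "W ! i = c" "wlen w (take (Suc i) W) = \<delta> A c"
    and j: "j < length W" "W ! j = u" "wlen w (take (Suc j) W) = \<delta> A u"
    using shortest_walk_through[OF assms(1,2) _ W] assms(3-6) by metis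
  have "i \<le> j"
    using wlen_take_strict_mono[OF \<open>walk F W\<close> _ i(1), of j] i(3) j(3) assms(7) by linarith
  then show ?thesis
    using gdist_le_wlen_take_diff[OF \<open>walk F W\<close> _ j(1), of i] i j by simp
qed

lemma geodesic_through_edge:
  assumes e: "{c, c'} \<in> F" and "u \<in> V" and geo: "\<delta> c u + \<delta> u c' = \<delta> c c'"
  shows "u = c \<or> u = c'"
proof -
  have V: "c \<in> V" "c' \<in> V"
    using edge_ends_in_V e by auto
  obtain W where W: "walk_betw F c W c'" "wlen w W = \<delta> c c'"
    using shortest_walk_exists V by blast
  have "W = [c, c']"
    using W shortest_walk_distinct[OF W] e edge_ends_distinct[OF e]
    by (intro distinct_walk_unique) (auto simp: walk_betw_def)
  moreover obtain i where "i < length W" "W ! i = u"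
    using shortest_walk_through[OF V(1,2) \<open>u \<in> V\<close> W geo] by blast
  ultimately show ?thesis
    by (auto simp: less_Suc_eq nth_Cons')
qed

end

section \<open>Distances in the metric tree\<close>

lemma tends_finite: "finite (tends p)"
  and tends_nonempty: "tends p \<noteq> {}"
  by (cases p; simp add: tends_def)+

lemma tdist_vtx_right: "tdist F w p (vtx B) = Min ((\<lambda>a. toff w p a + real (gdist F w a B)) ` tends p)"
proof -
  obtain x y t where p: "p = (x, y, t)"
    by (cases p)
  have "{toff w p a + real (gdist F w a b) + toff w (vtx B) b |a b. a \<in> tends p \<and> b \<in> tends (vtx B)}
     = (\<lambda>a. toff w p a + real (gdist F w a B)) ` tends p"
    by (auto simp: vtx_def tends_def toff_def)
  moreover have "(case p of (x, y, t) \<Rightarrow> case vtx B of (x', y', t') \<Rightarrow>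
         if x \<noteq> y \<and> x' = x \<and> y' = y then {\<bar>t - t'\<bar>}
         else if x \<noteq> y \<and> x' = y \<and> y' = x then {\<bar>t - (real (w {x, y}) - t')\<bar>}
         else {}) = {}"
    unfolding p vtx_def by auto
  ultimately show ?thesis
    unfolding tdist_def by simp
qed

lemma tdist_vtx_left: "tdist F w (vtx A) p = Min ((\<lambda>b. real (gdist F w A b) + toff w p b) ` tends p)"
proof -
  obtain x y t where p: "p = (x, y, t)"
    by (cases p)
  have "{toff w (vtx A) a + real (gdist F w a b) + toff w p b |a b. a \<in> tends (vtx A) \<and> b \<in> tends p}
     = (\<lambda>b. real (gdist F w A b) + toff w p b) ` tends p"
    by (auto simp: vtx_def tends_def toff_def)
  moreover have "(case vtx A of (x, y, t) \<Rightarrow> case p of (x', y', t') \<Rightarrow>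
         if x \<noteq> y \<and> x' = x \<and> y' = y then {\<bar>t - t'\<bar>}
         else if x \<noteq> y \<and> x' = y \<and> y' = x then {\<bar>t - (real (w {x, y}) - t')\<bar>}
         else {}) = {}"
    unfolding p vtx_def by auto
  ultimately show ?thesis
    unfolding tdist_def by simp
qed

lemma tdist_vtx_commute: "tdist F w (vtx A) p = tdist F w p (vtx A)"
  unfolding tdist_vtx_left tdist_vtx_right by (simp add: gdist_commute add.commute)

lemma tdist_vtx_right_le: "a \<in> tends p \<Longrightarrow> tdist F w p (vtx B) \<le> toff w p a + real (gdist F w a B)"
  unfolding tdist_vtx_right by (rule Min_le) (simp_all add: tends_finite)

lemma tdist_vtx_left_le: "b \<in> tends p \<Longrightarrow> tdist F w (vtx A) p \<le> real (gdist F w A b) + toff w p b"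
  unfolding tdist_vtx_left by (rule Min_le) (simp_all add: tends_finite)

lemma tdist_vtx_right_attained: "\<exists>a\<in>tends p. tdist F w p (vtx B) = toff w p a + real (gdist F w a B)"
proof -
  have "tdist F w p (vtx B) \<in> (\<lambda>a. toff w p a + real (gdist F w a B)) ` tends p"
    unfolding tdist_vtx_right by (rule Min_in) (simp_all add: tends_finite tends_nonempty)
  then show ?thesis by blast
qed

lemma tdist_vtx_left_attained: "\<exists>b\<in>tends p. tdist F w (vtx A) p = real (gdist F w A b) + toff w p b"
proof -
  have "tdist F w (vtx A) p \<in> (\<lambda>b. real (gdist F w A b) + toff w p b) ` tends p"
    unfolding tdist_vtx_left by (rule Min_in) (simp_all add: tends_finite tends_nonempty)
  then show ?thesis by blast
qed

context weighted_tree
begin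

lemma valid_tpt_tends_subset: "valid_tpt V F w p \<Longrightarrow> tends p \<subseteq> V"
  by (cases p) (auto simp: valid_tpt_def tends_def dest: edge_ends_in_V)

lemma toff_nonneg: "valid_tpt V F w p \<Longrightarrow> a \<in> tends p \<Longrightarrow> 0 \<le> toff w p a"
  by (cases p) (auto simp: valid_tpt_def tends_def toff_def)

lemma valid_tpt_edge:
  assumes "valid_tpt V F w p" "a \<in> tends p" "b \<in> tends p" "a \<noteq> b"
  shows "{a, b} \<in> F \<and> toff w p a + toff w p b = real (w {a, b})"
  using assms by (cases p) (auto simp: valid_tpt_def tends_def toff_def insert_commute)

lemma tdist_vtx_triangle:
  assumes "valid_tpt V F w p" "a \<in> V" "c \<in> V"
  shows "tdist F w p (vtx c) \<le> tdist F w p (vtx a) + real (\<delta> a c)"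
proof -
  obtain a' where a': "a' \<in> tends p" "tdist F w p (vtx a) = toff w p a' + real (\<delta> a' a)"
    using tdist_vtx_right_attained[where F = F and w = w] by blast
  then have "\<delta> a' c \<le> \<delta> a' a + \<delta> a c"
    using gdist_triangle valid_tpt_tends_subset assms by blast
  then show ?thesis
    using tdist_vtx_right_le[OF a'(1), of F w c] a'(2) by linarith
qed

text \<open>A point of the metric tree has several representations, so distance 0 from u does not
  give p = vtx u; it only makes p and u indistinguishable from the vertices.\<close>

lemma tdist_vtx_eq_gdist:
  assumes p: "valid_tpt V F w p" and "u \<in> V" "tdist F w p (vtx u) = 0" "A \<in> V"
  shows "tdist F w (vtx A) p = real (\<delta> A u)"
proof -
  obtain a where a: "a \<in> tends p" "tdist F w p (vtx u) = toff w p a + real (\<delta> a u)"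
    using tdist_vtx_right_attained[where F = F and w = w] by blast
  have "a \<in> V"
    using valid_tpt_tends_subset[OF p] a by blast
  have "0 \<le> toff w p a" "0 \<le> real (\<delta> a u)"
    using toff_nonneg[OF p a(1)] by simp_all
  then have off: "toff w p a = 0" and "\<delta> a u = 0"
    using a(2) assms(3) by linarith+
  then have "a = u"
    using gdist_eq_0_imp_eq \<open>a \<in> V\<close> \<open>u \<in> V\<close> by blast
  have "tdist F w (vtx A) p \<le> real (\<delta> A u)"
    using tdist_vtx_left_le[OF a(1), of F w A] off \<open>a = u\<close> by simp
  moreover obtain b where b: "b \<in> tends p" "tdist F w (vtx A) p = real (\<delta> A b) + toff w p b"
    using tdist_vtx_left_attained[where F = F and w = w] by blast
  moreover have "real (\<delta> A u) \<le> real (\<delta> A b) + toff w p b"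
  proof (cases "b = a")
    case False
    have edge: "{b, a} \<in> F \<and> toff w p b + toff w p a = real (w {b, a})"
      using valid_tpt_edge[OF p b(1) a(1) False] .
    then have "\<delta> b a \<le> w {b, a}"
      using gdist_edge_le[of b a F w] by blast
    moreover have "\<delta> A u \<le> \<delta> A b + \<delta> b a"
      using gdist_triangle[of A b a] assms(4) edge_ends_in_V edge \<open>a = u\<close> by blast
    ultimately show ?thesis
      using edge off by linarith
  qed (use off \<open>a = u\<close> in simp)
  ultimately show ?thesis
    by linarith
qed

lemma edge_on_geodesic:
  assumes e: "{c, c'} \<in> F" and V: "A \<in> V" "B \<in> V"
    and geo: "\<delta> A c + w {c, c'} + \<delta> c' B = \<delta> A B"
  shows "\<delta> c c' = w {c, c'}" "\<delta> A c' = \<delta> A c + w {c, c'}"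
    "\<delta> A c + \<delta> c B = \<delta> A B" "\<delta> A c' + \<delta> c' B = \<delta> A B"
proof -
  have cV: "c \<in> V" "c' \<in> V"
    using edge_ends_in_V e by auto
  have "\<delta> c c' \<le> w {c, c'}"
    using gdist_edge_le[of c c' F w] e by blast
  moreover have "\<delta> A c' \<le> \<delta> A c + \<delta> c c'" "\<delta> c B \<le> \<delta> c c' + \<delta> c' B"
    "\<delta> A B \<le> \<delta> A c' + \<delta> c' B" "\<delta> A B \<le> \<delta> A c + \<delta> c B"
    using gdist_triangle[OF V(1) cV(1) cV(2)] gdist_triangle[OF cV(1) cV(2) V(2)]
      gdist_triangle[OF V(1) cV(2) V(2)] gdist_triangle[OF V(1) cV(1) V(2)] by simp_all
  ultimately show "\<delta> c c' = w {c, c'}" "\<delta> A c' = \<delta> A c + w {c, c'}"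
    "\<delta> A c + \<delta> c B = \<delta> A B" "\<delta> A c' + \<delta> c' B = \<delta> A B"
    using geo by linarith+
qed

lemma tdist_vtx_le_via_end:
  assumes "a \<in> tends p" "tdist F w (vtx A) p + toff w p a = real (\<delta> A a)" "\<delta> A a + \<delta> a u \<le> \<delta> A u"
  shows "tdist F w p (vtx u) \<le> real (\<delta> A u) - tdist F w (vtx A) p"
proof -
  have "real (\<delta> A a) + real (\<delta> a u) \<le> real (\<delta> A u)"
    using assms(3) by (metis of_nat_add of_nat_le_iff)
  then show ?thesis
    using tdist_vtx_right_le[OF assms(1), of F w u] assms(2) by linarith
qed

text \<open>This fails in general graphs, where two geodesics from A to B may diverge; in the tree it
  rests on the uniqueness of paths.\<close>

lemma tdist_vtx_on_geodesic_le:
  assumes p: "valid_tpt V F w p" and V: "A \<in> V" "B \<in> V" "u \<in> V"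
    and p_geo: "tdist F w (vtx A) p + tdist F w p (vtx B) = real (\<delta> A B)"
    and u_geo: "\<delta> A u + \<delta> u B = \<delta> A B"
    and closer: "tdist F w (vtx A) p \<le> real (\<delta> A u)"
  shows "tdist F w p (vtx u) \<le> real (\<delta> A u) - tdist F w (vtx A) p"
proof -
  obtain c where c: "c \<in> tends p" "tdist F w (vtx A) p = real (\<delta> A c) + toff w p c"
    using tdist_vtx_left_attained[where F = F and w = w] by blast
  obtain c' where c': "c' \<in> tends p" "tdist F w p (vtx B) = toff w p c' + real (\<delta> c' B)"
    using tdist_vtx_right_attained[where F = F and w = w] by blast
  have cV: "c \<in> V" "c' \<in> V"
    using valid_tpt_tends_subset[OF p] c c' by blast+
  have off: "0 \<le> toff w p c" "0 \<le> toff w p c'"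
    using toff_nonneg[OF p] c c' by blast+
  show ?thesis
  proof (cases "c = c'")
    case True
    have "real (\<delta> A B) \<le> real (\<delta> A c) + real (\<delta> c B)"
      using gdist_triangle[OF V(1) cV(1) V(2)] by (metis of_nat_add of_nat_le_iff)
    with p_geo c c'[unfolded True[symmetric]] off
    have "toff w p c = 0" and "real (\<delta> A c) + real (\<delta> c B) = real (\<delta> A B)"
      by linarith+
    then have "\<delta> A c + \<delta> c u \<le> \<delta> A u"
      using geodesic_ordered[OF V(1,2) cV(1) V(3) _ u_geo] closer c
      by (simp add: of_nat_add[symmetric] del: of_nat_add)
    then show ?thesis
      using tdist_vtx_le_via_end[OF c(1)] c \<open>toff w p c = 0\<close> by simp
  next
    case False
    have edge: "{c, c'} \<in> F \<and> toff w p c + toff w p c' = real (w {c, c'})"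
      using valid_tpt_edge[OF p c(1) c'(1) False] .
    have "real (\<delta> A c + w {c, c'} + \<delta> c' B) = real (\<delta> A B)"
      unfolding of_nat_add using p_geo c c' edge by linarith
    then have geo: "\<delta> c c' = w {c, c'}" "\<delta> A c' = \<delta> A c + w {c, c'}"
      "\<delta> A c + \<delta> c B = \<delta> A B" "\<delta> A c' + \<delta> c' B = \<delta> A B"
      using edge_on_geodesic[OF conjunct1[OF edge] V(1,2)] by (simp_all only: of_nat_eq_iff)
    show ?thesis
    proof (cases "\<delta> A c' \<le> \<delta> A u")
      case True
      have "tdist F w (vtx A) p + toff w p c' = real (\<delta> A c')"
        unfolding geo(2) of_nat_add using c edge by linarith
      then show ?thesis
        using tdist_vtx_le_via_end[OF c'(1)] geodesic_ordered[OF V(1,2) cV(2) V(3) geo(4) u_geo True]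
        by blast
    next
      case False
      have "\<delta> A c + \<delta> c u \<le> \<delta> A u"
        using geodesic_ordered[OF V(1,2) cV(1) V(3) geo(3) u_geo] closer c off by linarith
      moreover have "\<delta> A u + \<delta> u c' \<le> \<delta> A c'"
        using geodesic_ordered[OF V(1,2) V(3) cV(2) u_geo geo(4)] False by linarith
      moreover have "\<delta> c c' \<le> \<delta> c u + \<delta> u c'"
        using gdist_triangle[OF cV(1) V(3) cV(2)] .
      ultimately have "u = c"
        using geodesic_through_edge[OF conjunct1[OF edge] V(3)] geo(1,2) False by force
      then show ?thesis
        using closer c off tdist_vtx_right_le[OF c(1), of F w u] by simp
    qed
  qed
qed

lemma tdist_vtx_on_geodesic:
  assumes p: "valid_tpt V F w p" and V: "A \<in> V" "B \<in> V" "u \<in> V"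
    and p_geo: "tdist F w (vtx A) p + tdist F w p (vtx B) = real (\<delta> A B)"
    and u_geo: "\<delta> A u + \<delta> u B = \<delta> A B"
  shows "tdist F w p (vtx u) \<le> \<bar>real (\<delta> A u) - tdist F w (vtx A) p\<bar>"
proof (cases "tdist F w (vtx A) p \<le> real (\<delta> A u)")
  case True
  then show ?thesis
    using tdist_vtx_on_geodesic_le[OF p V p_geo u_geo] by simp
next
  case False
  have "tdist F w (vtx B) p + tdist F w p (vtx A) = real (\<delta> B A)"
    using p_geo by (simp add: tdist_vtx_commute gdist_commute[of F w A B])
  moreover have "\<delta> B u + \<delta> u A = \<delta> B A"
    using u_geo by (simp add: gdist_commute[of F w A] gdist_commute[of F w u B])
  moreover have "real (\<delta> A u) + real (\<delta> u B) = real (\<delta> A B)"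
    using u_geo by (metis of_nat_add)
  ultimately show ?thesis
    using tdist_vtx_on_geodesic_le[OF p V(2,1,3)] False p_geo
    by (simp add: tdist_vtx_commute gdist_commute[of F w B])
qed

end

section \<open>The preorder tour\<close>

lemma exists_step_containing:
  fixes f :: "nat \<Rightarrow> 'a::linorder"
  assumes "f a \<le> z" "z \<le> f b" "a < b"
  shows "\<exists>j. a \<le> j \<and> j < b \<and> f j \<le> z \<and> z \<le> f (Suc j)"
  using assms
proof (induction b)
  case (Suc b)
  show ?case
  proof (cases "a < b \<and> z \<le> f b")
    case True
    then show ?thesis using Suc.IH Suc.prems(1) less_SucI by blast
  next
    case False
    then have "a \<le> b" "f b \<le> z"
      using Suc.prems by (auto simp: less_Suc_eq)
    then show ?thesis using Suc.prems(2) by blast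
  qed
qed simp

text \<open>The position of vs ! j on the unit path P, i.e. the paper's l_(j+1).\<close>

definition tour_pos :: "'v set set \<Rightarrow> ('v set \<Rightarrow> nat) \<Rightarrow> 'v list \<Rightarrow> nat \<Rightarrow> nat" where
  "tour_pos F w vs j = (\<Sum>i\<in>{1..j}. gdist F w (vs ! (i - 1)) (vs ! i))"

lemma tour_pos_0 [simp]: "tour_pos F w vs 0 = 0"
  by (simp add: tour_pos_def)

lemma tour_pos_Suc [simp]: "tour_pos F w vs (Suc j) = tour_pos F w vs j + gdist F w (vs ! j) (vs ! Suc j)"
  by (simp add: tour_pos_def)

lemma tour_pos_mono: "i \<le> j \<Longrightarrow> tour_pos F w vs i \<le> tour_pos F w vs j"
  unfolding tour_pos_def by (rule sum_mono2) auto

lemma tour_segment_exists: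
  assumes "z \<le> tour_pos F w vs (length vs - 1)" "2 \<le> length vs"
  shows "\<exists>j. Suc j < length vs \<and> tour_pos F w vs j \<le> z \<and> z \<le> tour_pos F w vs (Suc j)"
  using exists_step_containing[of "tour_pos F w vs" 0 z "length vs - 1"] assms
  by (force simp del: tour_pos_Suc simp: less_diff_conv)

context weighted_tree
begin

lemma gdist_le_tour_pos_diff:
  assumes "set vs \<subseteq> V" "i \<le> j" "j < length vs"
  shows "\<delta> (vs ! i) (vs ! j) + tour_pos F w vs i \<le> tour_pos F w vs j"
  using assms(2,3)
proof (induction j)
  case (Suc j)
  show ?case
  proof (cases "i = Suc j")
    case False
    then have "\<delta> (vs ! i) (vs ! Suc j) \<le> \<delta> (vs ! i) (vs ! j) + \<delta> (vs ! j) (vs ! Suc j)"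
      using gdist_triangle assms(1) Suc.prems nth_mem by (metis Suc_lessD le_less_trans subsetD)
    with Suc False show ?thesis by simp
  qed simp
qed simp

lemma gdist_tour_vtx_le:
  assumes vs: "set vs \<subseteq> V" "k < length vs" "Suc j < length vs" and "u \<in> V"
    and u_dist: "real (\<delta> (vs ! j) u) = real y - real (tour_pos F w vs j)"
      "real (\<delta> (vs ! Suc j) u) = real (tour_pos F w vs (Suc j)) - real y"
  shows "real (\<delta> (vs ! k) u) \<le> \<bar>real (tour_pos F w vs k) - real y\<bar>"
proof -
  have V: "vs ! k \<in> V" "vs ! j \<in> V" "vs ! Suc j \<in> V"
    using vs by auto
  show ?thesis
  proof (cases "k \<le> j")
    case True
    have "\<delta> (vs ! k) u \<le> \<delta> (vs ! k) (vs ! j) + \<delta> (vs ! j) u"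
      using gdist_triangle[OF V(1,2) \<open>u \<in> V\<close>] .
    moreover have "\<delta> (vs ! k) (vs ! j) + tour_pos F w vs k \<le> tour_pos F w vs j"
      using gdist_le_tour_pos_diff[OF vs(1) True] vs(3) by simp
    ultimately show ?thesis
      using u_dist(1) by (smt (verit) of_nat_add of_nat_mono)
  next
    case False
    have "\<delta> (vs ! k) u \<le> \<delta> (vs ! k) (vs ! Suc j) + \<delta> (vs ! Suc j) u"
      using gdist_triangle[OF V(1,3) \<open>u \<in> V\<close>] .
    moreover have "\<delta> (vs ! Suc j) (vs ! k) + tour_pos F w vs (Suc j) \<le> tour_pos F w vs k"
      using gdist_le_tour_pos_diff[OF vs(1), of "Suc j" k] False vs(2) by simp
    ultimately show ?thesis
      using u_dist(2) gdist_commute[of F w "vs ! k"] by (smt (verit) of_nat_add of_nat_mono)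
  qed
qed

lemma tdist_tour_point_vtx_le:
  fixes P :: "nat \<Rightarrow> 'v tpt" and vs :: "'v list"
  defines "pos \<equiv> tour_pos F w vs"
  assumes vs: "set vs \<subseteq> V" and L: "L = pos (length vs - 1)"
    and valid: "\<And>x. x \<le> L \<Longrightarrow> valid_tpt V F w (P x)"
    and on_tour: "\<And>j x. Suc j < length vs \<Longrightarrow> pos j \<le> x \<Longrightarrow> x \<le> pos (Suc j) \<Longrightarrow>
        tdist F w (vtx (vs ! j)) (P x) = real x - real (pos j) \<and>
        tdist F w (P x) (vtx (vs ! Suc j)) = real (pos (Suc j)) - real x"
    and x: "x \<le> L" and y: "y \<le> L" and u: "u \<in> V" and at_u: "tdist F w (P y) (vtx u) = 0"
  shows "tdist F w (P x) (vtx u) \<le> \<bar>real x - real y\<bar>"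
proof (cases "x = y")
  case False
  then have "2 \<le> length vs"
    using x y L by (cases vs rule: remdups_adj.cases) (auto simp: pos_def)
  then obtain i j where i: "Suc i < length vs" "pos i \<le> x" "x \<le> pos (Suc i)"
    and j: "Suc j < length vs" "pos j \<le> y" "y \<le> pos (Suc j)"
    using tour_segment_exists x y L unfolding pos_def by metis
  have vs_V: "vs ! i \<in> V" "vs ! Suc i \<in> V" "vs ! j \<in> V" "vs ! Suc j \<in> V"
    using vs i(1) j(1) by auto
  have tour_x: "tdist F w (P x) (vtx (vs ! i)) = real x - real (pos i)"
    "tdist F w (P x) (vtx (vs ! Suc i)) = real (pos (Suc i)) - real x"
    using on_tour[OF i] tdist_vtx_commute by metis+
  have u_dist: "real (\<delta> (vs ! j) u) = real y - real (pos j)"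
    "real (\<delta> (vs ! Suc j) u) = real (pos (Suc j)) - real y"
    using on_tour[OF j] tdist_vtx_eq_gdist[OF valid[OF y] u at_u] vs_V(3,4)
    by (simp_all add: tdist_vtx_commute gdist_commute[of F w u])
  have u_near: "real (\<delta> (vs ! k) u) \<le> \<bar>real (pos k) - real y\<bar>" if "k < length vs" for k
    using gdist_tour_vtx_le[OF vs that j(1) u u_dist[unfolded pos_def]] unfolding pos_def .
  consider "i < j" | "j < i" | "i = j"
    by linarith
  then show ?thesis
  proof cases
    case 1
    then have "pos (Suc i) \<le> pos j"
      unfolding pos_def by (intro tour_pos_mono) simp
    then show ?thesis
      using tdist_vtx_triangle[OF valid[OF x] vs_V(2) u] tour_x(2) u_near[OF i(1)] i j
      by (smt (verit) of_nat_mono)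
  next
    case 2
    then have "pos (Suc j) \<le> pos i"
      unfolding pos_def by (intro tour_pos_mono) simp
    then show ?thesis
      using tdist_vtx_triangle[OF valid[OF x] vs_V(1) u] tour_x(1) u_near[of i] i j
      by (smt (verit) Suc_lessD of_nat_mono)
  next
    case 3
    have "real (\<delta> (vs ! i) (vs ! Suc i)) = real (pos (Suc i)) - real (pos i)"
      unfolding pos_def by simp
    moreover have "\<delta> (vs ! i) u + \<delta> u (vs ! Suc i) = \<delta> (vs ! i) (vs ! Suc i)"
      using calculation u_dist 3 gdist_commute[of F w u] by (smt (verit) of_nat_add of_nat_eq_iff)
    ultimately show ?thesis
      using tdist_vtx_on_geodesic[OF valid[OF x] vs_V(1,2) u] on_tour[OF i] u_dist 3 by smt
  qed
qed (simp add: at_u)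

lemma preorder_tour_point_vtx_le:
  assumes pre: "preorder_traversal V F w vs"
    and L: "L = (\<Sum>j'\<in>{1..<card V}. gdist F w (vs ! (j' - 1)) (vs ! j'))"
    and valid: "\<forall>x\<le>L. valid_tpt V F w (P x)"
    and on_tour: "\<forall>j'\<in>{1..<card V}. \<forall>x.
        (\<Sum>j''\<in>{1..<j'}. gdist F w (vs ! (j'' - 1)) (vs ! j'')) \<le> x \<and>
        x \<le> (\<Sum>j''\<in>{1..j'}. gdist F w (vs ! (j'' - 1)) (vs ! j'')) \<longrightarrow>
          tdist F w (vtx (vs ! (j' - 1))) (P x)
            = real x - real (\<Sum>j''\<in>{1..<j'}. gdist F w (vs ! (j'' - 1)) (vs ! j'')) \<and>
          tdist F w (P x) (vtx (vs ! j'))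
            = real (\<Sum>j''\<in>{1..j'}. gdist F w (vs ! (j'' - 1)) (vs ! j'')) - real x"
    and "x \<le> L" "y \<le> L" "u \<in> V" "tdist F w (P y) (vtx u) = 0"
  shows "tdist F w (P x) (vtx u) \<le> \<bar>real x - real y\<bar>"
proof (rule tdist_tour_point_vtx_le)
  have vs: "set vs = V" "length vs = card V"
    using pre distinct_card unfolding preorder_traversal_def by metis+
  then show "set vs \<subseteq> V"
    by simp
  have "{1..<n} = {1..n - 1}" for n :: nat
    by auto
  then show "L = tour_pos F w vs (length vs - 1)"
    unfolding L tour_pos_def vs(2) by simp
  show "tdist F w (vtx (vs ! j)) (P z) = real z - real (tour_pos F w vs j) \<and>
      tdist F w (P z) (vtx (vs ! Suc j)) = real (tour_pos F w vs (Suc j)) - real z"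
    if "Suc j < length vs" "tour_pos F w vs j \<le> z" "z \<le> tour_pos F w vs (Suc j)" for j z
    using on_tour[rule_format, of "Suc j" z] that
    unfolding tour_pos_def atLeastLessThanSuc_atLeastAtMost vs(2) by simp
qed (use assms in auto)

end

section \<open>Intervals and the final estimate\<close>

lemma greedy_spanner_subset: "greedy_spanner t w es \<subseteq> set es"
proof -
  have "foldl (greedy_step t w) H es \<subseteq> H \<union> set es" for H
  proof (induction es arbitrary: H)
    case (Cons e es)
    have "greedy_step t w H e \<subseteq> insert e H"
      by (auto simp: greedy_step_def)
    with Cons.IH[of "greedy_step t w H e"] show ?case by auto
  qed simp
  then show ?thesis
    unfolding greedy_spanner_def by fastforce
qed

lemma weighted_tree_unique_mst:
  assumes "graph V E" "\<forall>e\<in>E. 0 < w e" "unique_mst V E w Z"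
  shows "weighted_tree V Z w"
  using assms unfolding weighted_tree_def graph_def unique_mst_def spanning_tree_def by blast

lemma dist_in_close_blocks:
  fixes m x y g h b :: nat
  assumes "(g - 1) * m \<le> x" "x \<le> g * m" "(h - 1) * m \<le> y" "y \<le> h * m" "\<bar>int h - int g\<bar> \<le> int b"
  shows "\<bar>real x - real y\<bar> \<le> (real b + 1) * real m"
proof -
  have block_start: "(real k - 1) * real m \<le> real ((k - 1) * m)" for k
    by (cases k) (auto simp: algebra_simps)
  have "real g \<le> real h + real b" "real h \<le> real g + real b"
    using assms(5) by linarith+
  then have "(real g - real h + 1) * real m \<le> (real b + 1) * real m"
    "(real h - real g + 1) * real m \<le> (real b + 1) * real m"
    by (simp_all add: mult_right_mono)
  moreover have "real x \<le> real g * real m" "real y \<le> real h * real m"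
    using assms(2,4) by (metis of_nat_le_iff of_nat_mult)+
  moreover have "(real g - 1) * real m \<le> real x" "(real h - 1) * real m \<le> real y"
    using assms(1,3) block_start by (meson order_trans of_nat_le_iff)+
  ultimately show ?thesis
    by (simp add: abs_le_iff algebra_simps)
qed

lemma block_scale:
  fixes \<epsilon> a :: real and L s m :: nat
  assumes "0 < \<epsilon>" "real s = 8 * real L / (\<epsilon> * a)" "real m = \<epsilon> * a / 8" "0 < m"
  shows "0 < a" "L = s * m"
proof -
  have "0 < \<epsilon> * a"
    using assms(3,4) by simp
  then show "0 < a"
    using assms(1) by (simp add: zero_less_mult_iff)
  then have "real L = real s * real m"
    unfolding assms(2,3) using assms(1) by (simp add: field_simps)
  then show "L = s * m"
    by (metis of_nat_eq_iff of_nat_mult)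
qed

lemma floor_ratio_scale_le:
  fixes W a \<epsilon> :: real
  assumes "0 < a" "a < W" "0 < \<epsilon>"
  shows "(real (nat \<lfloor>W / a\<rfloor>) + 1) * (\<epsilon> * a / 8) \<le> \<epsilon> * W / 4"
proof -
  have "0 \<le> \<lfloor>W / a\<rfloor>"
    using assms by simp
  then have "real (nat \<lfloor>W / a\<rfloor>) \<le> W / a"
    by (metis of_int_floor_le of_nat_nat)
  then have "real (nat \<lfloor>W / a\<rfloor>) * (\<epsilon> * a / 8) \<le> W / a * (\<epsilon> * a / 8)"
    by (rule mult_right_mono) (use assms in simp)
  also have "\<dots> = \<epsilon> * W / 8"
    using assms by (simp add: field_simps)
  finally have "real (nat \<lfloor>W / a\<rfloor>) * (\<epsilon> * a / 8) \<le> \<epsilon> * W / 8" .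
  moreover have "\<epsilon> * a / 8 \<le> \<epsilon> * W / 8"
    using assms by simp
  ultimately show ?thesis
    by (simp add: distrib_right)
qed

theorem proposition1:
  fixes V :: "'v set" and E :: "'v set set" and w :: "'v set \<Rightarrow> nat"
    and Z H :: "'v set set" and es :: "'v set list" and vs :: "'v list"
    and k i :: nat and \<epsilon> t a :: real and L s m :: nat
    and P :: "nat \<Rightarrow> 'v tpt" and r :: "nat \<Rightarrow> nat"
    and u v :: 'v and h j yu yv b :: nat and M :: "(nat \<times> nat) set" and g g' :: nat
  assumes G: "graph V E" and conn: "connected_on V E"
    and wpos: "\<forall>e\<in>E. 0 < w e"
    and mst: "unique_mst V E w Z"
    and k2: "2 \<le> k" and eps: "0 < \<epsilon>"
    and t_def: "t = (2 * real k - 1) * (1 + \<epsilon>)"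
    and es_sorted: "distinct es" "set es = E" "sorted (map w es)"
    and H_def: "H = greedy_spanner t w es"
    and pre: "preorder_traversal V Z w vs"
    and L_def: "L = (\<Sum>j'\<in>{1..<card V}. gdist Z w (vs ! (j' - 1)) (vs ! j'))"
    and i_range: "1 \<le> i" "real i \<le> real_of_int \<lceil>log (real k) (real (card V))\<rceil>"
    and a_def: "a = real k ^ (i - 1) * real L / real (card V)"
    and P_valid: "\<forall>x\<le>L. valid_tpt V Z w (P x)"
    and P_path: "\<forall>j'\<in>{1..<card V}. \<forall>x.
        (\<Sum>j''\<in>{1..<j'}. gdist Z w (vs ! (j'' - 1)) (vs ! j'')) \<le> x \<and>
        x \<le> (\<Sum>j''\<in>{1..j'}. gdist Z w (vs ! (j'' - 1)) (vs ! j'')) \<longrightarrow>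
          tdist Z w (vtx (vs ! (j' - 1))) (P x)
            = real x - real (\<Sum>j''\<in>{1..<j'}. gdist Z w (vs ! (j'' - 1)) (vs ! j'')) \<and>
          tdist Z w (P x) (vtx (vs ! j'))
            = real (\<Sum>j''\<in>{1..j'}. gdist Z w (vs ! (j'' - 1)) (vs ! j'')) - real x"
    and s_def: "real s = 8 * real L / (\<epsilon> * a)"
    and m_def: "real m = \<epsilon> * a / 8"
    and r_int: "\<forall>j'\<in>{1..s}. (j' - 1) * m < r j' \<and> r j' < j' * m"
    and uv_Ei: "{u, v} \<in> H" "{u, v} \<notin> Z" "a < real (w {u, v})" "real (w {u, v}) \<le> real k * a"
    and h_j: "h \<in> {1..s}" "j \<in> {1..s}"
    and u_in: "(h - 1) * m \<le> yu" "yu \<le> h * m" "tdist Z w (P yu) (vtx u) = 0"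
    and v_in: "(j - 1) * m \<le> yv" "yv \<le> j * m" "tdist Z w (P yv) (vtx v) = 0"
    and b_def: "b = nat \<lfloor>real (w {u, v}) / a\<rfloor>"
    and M_sub: "M \<subseteq> {g1\<in>{1..s}. \<bar>int h - int g1\<bar> \<le> int b} \<times> {g1\<in>{1..s}. \<bar>int j - int g1\<bar> \<le> int b}"
    and M_matching: "\<forall>(g1, g1')\<in>M. \<forall>(g2, g2')\<in>M. g1 = g2 \<longleftrightarrow> g1' = g2'"
    and M_maximal: "\<forall>g1\<in>{g1\<in>{1..s}. \<bar>int h - int g1\<bar> \<le> int b}.
                     \<forall>g1'\<in>{g1\<in>{1..s}. \<bar>int j - int g1\<bar> \<le> int b}.
                     \<exists>(g2, g2')\<in>M. g2 = g1 \<or> g2' = g1'"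
    and qq': "(g, g') \<in> M"
  shows "tdist Z w (P (r g)) (vtx u) + real (w {u, v}) + tdist Z w (vtx v) (P (r g'))
           \<le> (1 + \<epsilon> / 2) * real (w {u, v})"
proof -
  interpret weighted_tree V Z w
    using weighted_tree_unique_mst G wpos mst .
  have "{u, v} \<in> E"
    using greedy_spanner_subset[of t w es] uv_Ei(1) es_sorted(2) unfolding H_def by blast
  then have uv: "u \<in> V" "v \<in> V"
    using G unfolding graph_def by blast+
  have g: "g \<in> {1..s}" "\<bar>int h - int g\<bar> \<le> int b" and g': "g' \<in> {1..s}" "\<bar>int j - int g'\<bar> \<le> int b"
    using M_sub qq' by auto
  then have r: "(g - 1) * m < r g" "r g < g * m" "(g' - 1) * m < r g'" "r g' < g' * m"
    using r_int by auto
  then have "0 < m"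
    by (cases m) auto
  then have "0 < a" "L = s * m"
    using block_scale eps s_def m_def by blast+
  then have "g * m \<le> L" "g' * m \<le> L" "h * m \<le> L" "j * m \<le> L"
    using g(1) g'(1) h_j by simp_all
  then have in_range: "r g \<le> L" "r g' \<le> L" "yu \<le> L" "yv \<le> L"
    using r u_in(2) v_in(2) by linarith+
  have "(real b + 1) * real m \<le> \<epsilon> * real (w {u, v}) / 4"
    using floor_ratio_scale_le[OF \<open>0 < a\<close> uv_Ei(3) eps] unfolding b_def m_def .
  moreover have "\<bar>real (r g) - real yu\<bar> \<le> (real b + 1) * real m"
    "\<bar>real (r g') - real yv\<bar> \<le> (real b + 1) * real m"
    using dist_in_close_blocks[OF less_imp_le[OF r(1)] less_imp_le[OF r(2)] u_in(1,2) g(2)]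
      dist_in_close_blocks[OF less_imp_le[OF r(3)] less_imp_le[OF r(4)] v_in(1,2) g'(2)] .
  moreover have "tdist Z w (P (r g)) (vtx u) \<le> \<bar>real (r g) - real yu\<bar>"
    "tdist Z w (vtx v) (P (r g')) \<le> \<bar>real (r g') - real yv\<bar>"
    using preorder_tour_point_vtx_le[OF pre L_def P_valid P_path] in_range uv u_in(3) v_in(3)
    by (simp_all add: tdist_vtx_commute)
  ultimately show ?thesis
    by (simp add: algebra_simps)
qed

end
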